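(* Let $h$ and $k$ be relatively prime odd integers with $k>0$. Then $$B_{1}(h,k)=-10h\,s(h,k)+4h\,s(2h,k)+4h\,s(h,2k)+\frac{1}{2k}-\frac{1}{2}.$$
   Context: $[x]$ denotes the greatest integer $\le x$, and $((x))=x-[x]-\tfrac12$ if $x\notin\mathbb{Z}$, $((x))=0$ if $x\in\mathbb{Z}$. For integers $a,b$ with $b>0$: the Dedekind sum is $s(a,b)=\sum_{j=1}^{b-1}\left(\left(\frac{aj}{b}\right)\right)\left(\left(\frac{j}{b}\right)\right)$, and (for $\gcd(a,b)=1$) $$B_{1}(a,b)=\sum_{j=1}^{b-1}(-1)^{j+\left[\frac{aj}{b}\right]}\left[\frac{aj}{b}\right].$$ *)

theory Defs
  imports Complex_Main
begin

definition sawtooth :: "real \<Rightarrow> real" where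
  "sawtooth x = (if x \<in> \<int> then 0 else x - of_int \<lfloor>x\<rfloor> - 1/2)"

definition dedekind_sum :: "int \<Rightarrow> int \<Rightarrow> real" where
  "dedekind_sum a b = (\<Sum>j\<in>{1..b-1}. sawtooth (of_int (a*j) / of_int b) * sawtooth (of_int j / of_int b))"

definition B1 :: "int \<Rightarrow> int \<Rightarrow> int" where
  "B1 a b = (\<Sum>j\<in>{1..b-1}. (-1) ^ nat \<bar>j + (a*j) div b\<bar> * ((a*j) div b))"

end

theory Submission
  imports Defs "HOL-Number_Theory.Modular_Inverse"
begin

text \<open>
  Write \<open>h j = k q\<^sub>j + r\<^sub>j\<close> with \<open>0 < r\<^sub>j < k\<close>, and let \<open>e\<^sub>j\<close>, \<open>f\<^sub>j\<close> indicate
  \<open>2 r\<^sub>j > k\<close> and \<open>2 j > k\<close>. Since \<open>h\<close> and \<open>k\<close> are odd, \<open>j + q\<^sub>j \<equiv> r\<^sub>j (mod 2)\<close>, so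
  \<open>B\<^sub>1(h,k)\<close> and, after eliminating \<open>h j\<close>, the three Dedekind sums become sums over
  \<open>1 \<le> j < k\<close> of polynomials in \<open>q\<^sub>j, r\<^sub>j, e\<^sub>j, f\<^sub>j\<close> and the parities of \<open>q\<^sub>j, r\<^sub>j\<close>.
  The permutations \<open>j \<mapsto> r\<^sub>j\<close>, \<open>j \<mapsto> k - j\<close> and \<open>j \<mapsto> 2j mod k\<close> of \<open>{1..k-1}\<close> act on these
  quantities in a controlled way (doubling sends \<open>q\<^sub>j\<close> to \<open>2q\<^sub>j - h f\<^sub>j + e\<^sub>j\<close> and \<open>r\<^sub>j\<close> to
  \<open>2r\<^sub>j - k e\<^sub>j\<close>, reflection sends them to \<open>h - 1 - q\<^sub>j\<close> and \<open>k - r\<^sub>j\<close>), and the resulting linear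
  relations reduce the identity to the elementary sums \<open>\<Sum> f\<^sub>j\<close>, \<open>\<Sum> r\<^sub>j\<close> and \<open>\<Sum> r\<^sub>j e\<^sub>j\<close>.
\<close>

lemma sawtooth_add_of_int: "sawtooth (x + of_int n) = sawtooth x"
proof -
  have "x + of_int n \<in> \<int> \<longleftrightarrow> x \<in> \<int>"
    by (metis Ints_add Ints_diff Ints_of_int add_diff_cancel_right')
  then show ?thesis by (simp add: sawtooth_def)
qed

lemma sawtooth_minus: "sawtooth (- x) = - sawtooth x"
proof (cases "x \<in> \<int>")
  case True
  then show ?thesis by (simp add: sawtooth_def)
next
  case False
  then have "- x \<notin> \<int>" and "x \<noteq> of_int \<lfloor>x\<rfloor>"
    by (metis Ints_minus minus_minus, metis Ints_of_int)
  moreover from \<open>x \<noteq> of_int \<lfloor>x\<rfloor>\<close> have "\<lfloor>- x\<rfloor> = - \<lfloor>x\<rfloor> - 1"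
    by (simp add: floor_minus ceiling_altdef)
  ultimately show ?thesis using False by (simp add: sawtooth_def)
qed

lemma sawtooth_of_int_diff: "sawtooth (of_int n - x) = - sawtooth x"
  using sawtooth_add_of_int[of "- x" n] sawtooth_minus[of x] by simp

lemma sawtooth_of_int_divide:
  fixes a b :: int
  assumes "b > 0" and "\<not> b dvd a"
  shows "sawtooth (of_int a / of_int b) = of_int (a mod b) / of_int b - 1/2"
proof -
  have "of_int a / of_int b \<notin> (\<int> :: real set)"
  proof
    assume "of_int a / of_int b \<in> (\<int> :: real set)"
    then obtain n where "of_int a / of_int b = (of_int n :: real)"
      by (auto elim: Ints_cases)
    then have "a = n * b"
      using assms(1) by (simp add: field_simps flip: of_int_mult)
    with assms(2) show False by simp
  qed
  moreover have "of_int a / of_int b - of_int (a div b) = (of_int (a mod b) :: real) / of_int b"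
    using assms(1) by (simp add: field_simps flip: of_int_mult of_int_add)
  ultimately show ?thesis by (simp add: sawtooth_def floor_divide_of_int_eq)
qed

lemma sawtooth_of_int_divide_small:
  fixes a b :: int
  assumes "0 < a" and "a < b"
  shows "sawtooth (of_int a / of_int b) = of_int a / of_int b - 1/2"
  using sawtooth_of_int_divide[of b a] assms by (simp add: zdvd_not_zless)

lemma dedekind_sum_double_modulus:
  fixes a b :: int
  assumes "b > 0"
  shows "dedekind_sum a (2*b) =
    2 * (\<Sum>j\<in>{1..b-1}. sawtooth (of_int (a*j) / of_int (2*b)) * sawtooth (of_int j / of_int (2*b)))"
proof -
  define g where "g j = sawtooth (of_int (a*j) / of_int (2*b)) * sawtooth (of_int j / of_int (2*b))" for j
  have g_reflect: "g (2*b - j) = g j" for j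
  proof -
    have "of_int (a*(2*b - j)) / of_int (2*b) = of_int a - (of_int (a*j) / of_int (2*b) :: real)"
      and "of_int (2*b - j) / of_int (2*b) = of_int 1 - (of_int j / of_int (2*b) :: real)"
      using assms by (simp_all add: field_simps)
    then show ?thesis
      unfolding g_def by (simp only: sawtooth_of_int_diff mult_minus_left mult_minus_right minus_minus)
  qed
  \<comment> \<open>the middle term vanishes because ((1/2)) = 0\<close>
  have "g b = 0"
    using assms by (simp add: g_def sawtooth_def)
  have upper_part: "(\<Sum>j\<in>{b+1..2*b-1}. g j) = (\<Sum>j\<in>{1..b-1}. g j)"
    by (rule sum.reindex_bij_witness[of _ "\<lambda>j. 2*b - j" "\<lambda>j. 2*b - j"]) (auto simp: g_reflect)
  have "{1..2*b-1} = {1..b-1} \<union> ({b} \<union> {b+1..2*b-1})"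
    using assms by auto
  then have "dedekind_sum a (2*b) = (\<Sum>j\<in>{1..b-1}. g j) + (g b + (\<Sum>j\<in>{b+1..2*b-1}. g j))"
    unfolding dedekind_sum_def g_def[symmetric] by (simp add: sum.union_disjoint)
  then show ?thesis
    using \<open>g b = 0\<close> upper_part by (simp add: g_def)
qed

lemma int_div_mod_eqI:
  fixes a b Q R :: int
  assumes "a = b * Q + R" and "0 \<le> R" and "R < b"
  shows "a div b = Q" and "a mod b = R"
  using assms by (simp_all add: div_pos_pos_trivial mod_pos_pos_trivial)

lemma bij_betw_mult_mod:
  fixes a n :: int
  assumes "coprime a n"
  shows "bij_betw (\<lambda>j. a*j mod n) {1..n-1} {1..n-1}"
proof -
  have "{1..<n} = {1..n-1}"
    by auto
  then show ?thesis
    using bij_betw_int_remainders_mult[OF assms] by simp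
qed

locale odd_coprime_pair =
  fixes h k :: int
  assumes odd_h: "odd h" and odd_k: "odd k" and k_pos: "k > 0" and coprime_hk: "coprime h k"
begin

abbreviation A :: "int set" where "A \<equiv> {1..k-1}"

definition q :: "int \<Rightarrow> int" where "q j = h*j div k"
definition r :: "int \<Rightarrow> int" where "r j = h*j mod k"
text \<open>In the notation of the sketch above, \<open>f\<^sub>j = upper j\<close> and \<open>e\<^sub>j = upper (r j)\<close>.\<close>

definition upper :: "int \<Rightarrow> int" where "upper y = of_bool (k < 2*y)"
definition m :: int where "m = k div 2"

lemma k_eq: "k = 2*m + 1"
  using odd_k by (simp add: m_def)

lemma m_nonneg: "m \<ge> 0"
  using k_pos k_eq by simp

lemma hj_eq: "h*j = k * q j + r j"
  by (simp add: q_def r_def)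

lemma sum_reindex_r: "(\<Sum>j\<in>A. g (r j)) = sum g A"
  using sum.reindex_bij_betw[OF bij_betw_mult_mod[OF coprime_hk]] by (simp add: r_def)

lemma sum_reindex_double: "(\<Sum>j\<in>A. g (2*j mod k)) = sum g A"
  using sum.reindex_bij_betw[OF bij_betw_mult_mod[of 2]] odd_k by simp

lemma sum_reindex_reflect: "(\<Sum>j\<in>A. g (k - j)) = sum g A"
  by (rule sum.reindex_bij_witness[of _ "\<lambda>j. k - j" "\<lambda>j. k - j"]) auto

lemma r_mem: "j \<in> A \<Longrightarrow> r j \<in> A"
  using bij_betwE[OF bij_betw_mult_mod[OF coprime_hk]] by (simp add: r_def)

lemma q_r_reflect:
  assumes "j \<in> A"
  shows "q (k - j) = h - 1 - q j" and "r (k - j) = k - r j"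
proof -
  have "h*(k - j) = k*(h - 1 - q j) + (k - r j)"
    using hj_eq[of j] by (simp add: algebra_simps)
  moreover have "0 \<le> k - r j" "k - r j < k"
    using r_mem[OF assms] by auto
  ultimately show "q (k - j) = h - 1 - q j" and "r (k - j) = k - r j"
    unfolding q_def[of "k - j"] r_def[of "k - j"] by (rule int_div_mod_eqI)+
qed

lemma two_mult_neq_k: "2*y \<noteq> k"
  using odd_k by presburger

lemma upper_reflect: "upper (k - y) = 1 - upper y"
  using two_mult_neq_k[of y] by (auto simp: upper_def)

lemma double_mod: "0 \<le> y \<Longrightarrow> y < k \<Longrightarrow> 2*y mod k = 2*y - k * upper y"
  by (rule int_div_mod_eqI(2)[of _ _ "upper y"])
    (use two_mult_neq_k[of y] in \<open>auto simp: upper_def\<close>)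

lemma q_r_double:
  assumes "j \<in> A"
  shows "q (2*j mod k) = 2 * q j - h * upper j + upper (r j)"
    and "r (2*j mod k) = 2 * r j - k * upper (r j)"
proof -
  have "h * (2*j mod k) = h * (2*j - k * upper j)"
    using assms double_mod[of j] by simp
  also have "\<dots> = 2 * (h * j) - k * h * upper j"
    by (simp add: algebra_simps)
  also have "\<dots> = 2 * (k * q j + r j) - k * h * upper j"
    by (simp only: hj_eq)
  also have "\<dots> = k * (2 * q j - h * upper j + upper (r j)) + (2 * r j - k * upper (r j))"
    by (simp add: algebra_simps)
  finally have "h * (2*j mod k) =
      k * (2 * q j - h * upper j + upper (r j)) + (2 * r j - k * upper (r j))" .
  moreover have "0 \<le> 2 * r j - k * upper (r j)" "2 * r j - k * upper (r j) < k"
    using r_mem[OF assms] two_mult_neq_k[of "r j"] by (auto simp: upper_def)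
  ultimately show "q (2*j mod k) = 2 * q j - h * upper j + upper (r j)"
    and "r (2*j mod k) = 2 * r j - k * upper (r j)"
    unfolding q_def[of "2*j mod k"] r_def[of "2*j mod k"] by (rule int_div_mod_eqI)+
qed

lemma upper_cases: "upper y = 0 \<or> upper y = 1"
  by (simp add: upper_def)

lemma even_j_add_q_iff: "even (j + q j) \<longleftrightarrow> even (r j)"
  using arg_cong[OF hj_eq[of j], of even] odd_h odd_k by auto

lemma q_mod_2_reflect: "j \<in> A \<Longrightarrow> q (k - j) mod 2 = q j mod 2"
  using q_r_reflect(1)[of j] odd_h by presburger

lemma r_mod_2_double: "j \<in> A \<Longrightarrow> r (2*j mod k) mod 2 = upper (r j)"
  using q_r_double(2)[of j] upper_cases[of "r j"] odd_k by auto presburger+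

lemma q_mod_2_double:
  "j \<in> A \<Longrightarrow> q (2*j mod k) mod 2 = upper j + upper (r j) - 2 * upper j * upper (r j)"
  using q_r_double(1)[of j] upper_cases[of j] upper_cases[of "r j"] odd_h by auto presburger+

lemma card_A: "(\<Sum>j\<in>A. 1 :: int) = 2*m"
  using k_eq m_nonneg by simp

lemma sum_upper: "(\<Sum>j\<in>A. upper j) = m"
proof -
  have "(\<Sum>j\<in>A. upper j) = (\<Sum>j\<in>A. upper (k - j))"
    by (rule sum_reindex_reflect[symmetric])
  also have "\<dots> = (\<Sum>j\<in>A. 1 - upper j)"
    by (simp add: upper_reflect)
  finally show ?thesis
    using card_A by (simp add: sum_subtractf)
qed

lemma sum_upper_r: "(\<Sum>j\<in>A. upper (r j)) = m"
  using sum_reindex_r[of upper] sum_upper by simp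

lemma sum_r: "(\<Sum>j\<in>A. r j) = k * m"
proof -
  have "(\<Sum>j\<in>A. r j) = (\<Sum>j\<in>A. r (k - j))"
    by (rule sum_reindex_reflect[symmetric])
  also have "\<dots> = (\<Sum>j\<in>A. k - r j)"
    by (rule sum.cong) (simp_all add: q_r_reflect)
  finally show ?thesis
    using card_A by (simp add: sum_subtractf flip: sum_distrib_left)
qed

lemma sum_r_upper_r: "2 * (\<Sum>j\<in>A. r j * upper (r j)) = m * (3*m + 1)"
proof -
  have "(\<Sum>j\<in>A. r j * upper (r j)) = (\<Sum>j\<in>A. j * upper j)"
    by (rule sum_reindex_r)
  also have "\<dots> = (\<Sum>j\<in>{m+1..2*m}. j)"
  proof (rule sum.mono_neutral_cong_right)
    show "{m+1..2*m} \<subseteq> A"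
      using k_eq by auto
    show "\<forall>j\<in>A - {m+1..2*m}. j * upper j = 0"
      using k_eq by (auto simp: upper_def)
    show "\<And>j. j \<in> {m+1..2*m} \<Longrightarrow> j * upper j = j"
      using k_eq by (auto simp: upper_def)
  qed simp
  finally have "(\<Sum>j\<in>A. r j * upper (r j)) = (\<Sum>j\<in>{m+1..2*m}. j)" .
  moreover have "(\<Sum>j\<in>{m+1..2*m}. j) = (\<Sum>j\<in>{m+1..2*m}. 3*m + 1 - j)"
    by (rule sum.reindex_bij_witness[of _ "\<lambda>j. 3*m + 1 - j" "\<lambda>j. 3*m + 1 - j"]) auto
  moreover have "(\<Sum>j\<in>{m+1..2*m}. 3*m + 1 - j) = (3*m + 1) * m - (\<Sum>j\<in>{m+1..2*m}. j)"
    using m_nonneg by (simp add: sum_subtractf)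
  ultimately show ?thesis
    by (simp add: algebra_simps)
qed

lemma sum_q_r_mod_2:
  "(\<Sum>j\<in>A. q j * (r j mod 2)) =
     2 * (\<Sum>j\<in>A. q j * upper (r j)) - h * (\<Sum>j\<in>A. upper j * upper (r j))
     + (\<Sum>j\<in>A. upper (r j))"
proof -
  have "(\<Sum>j\<in>A. q j * (r j mod 2)) = (\<Sum>j\<in>A. q (2*j mod k) * (r (2*j mod k) mod 2))"
    by (rule sum_reindex_double[symmetric])
  also have "\<dots> = (\<Sum>j\<in>A. 2 * (q j * upper (r j)) - h * (upper j * upper (r j)) + upper (r j))"
  proof (rule sum.cong)
    fix j assume "j \<in> A"
    then show "q (2*j mod k) * (r (2*j mod k) mod 2) =
        2 * (q j * upper (r j)) - h * (upper j * upper (r j)) + upper (r j)"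
      using q_r_double(1) r_mod_2_double upper_cases[of "r j"] by (auto simp: algebra_simps)
  qed simp
  finally show ?thesis
    by (simp add: sum.distrib sum_subtractf sum_distrib_left)
qed

lemma sum_q_mod_2:
  "(\<Sum>j\<in>A. q j mod 2) =
     (\<Sum>j\<in>A. upper j) + (\<Sum>j\<in>A. upper (r j)) - 2 * (\<Sum>j\<in>A. upper j * upper (r j))"
proof -
  have "(\<Sum>j\<in>A. q j mod 2) = (\<Sum>j\<in>A. q (2*j mod k) mod 2)"
    by (rule sum_reindex_double[symmetric])
  also have "\<dots> = (\<Sum>j\<in>A. upper j + upper (r j) - 2 * (upper j * upper (r j)))"
    by (rule sum.cong) (simp_all add: q_mod_2_double)
  finally show ?thesis
    by (simp add: sum.distrib sum_subtractf sum_distrib_left)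
qed

lemma sum_q_q_mod_2: "2 * (\<Sum>j\<in>A. q j * (q j mod 2)) = (h - 1) * (\<Sum>j\<in>A. q j mod 2)"
proof -
  have "(\<Sum>j\<in>A. q j * (q j mod 2)) = (\<Sum>j\<in>A. q (k - j) * (q (k - j) mod 2))"
    by (rule sum_reindex_reflect[symmetric])
  also have "\<dots> = (\<Sum>j\<in>A. (h - 1) * (q j mod 2) - q j * (q j mod 2))"
  proof (rule sum.cong)
    fix j assume "j \<in> A"
    then show "q (k - j) * (q (k - j) mod 2) = (h - 1) * (q j mod 2) - q j * (q j mod 2)"
      by (subst q_mod_2_reflect) (simp_all add: q_r_reflect(1) algebra_simps)
  qed simp
  finally show ?thesis
    by (simp add: sum_subtractf sum_distrib_left)
qed

lemma sum_r_q_mod_2: "2 * (\<Sum>j\<in>A. r j * (q j mod 2)) = k * (\<Sum>j\<in>A. q j mod 2)"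
proof -
  have "(\<Sum>j\<in>A. r j * (q j mod 2)) = (\<Sum>j\<in>A. r (k - j) * (q (k - j) mod 2))"
    by (rule sum_reindex_reflect[symmetric])
  also have "\<dots> = (\<Sum>j\<in>A. k * (q j mod 2) - r j * (q j mod 2))"
    by (rule sum.cong) (simp_all add: q_r_reflect(2) q_mod_2_reflect algebra_simps)
  finally show ?thesis
    by (simp add: sum_subtractf sum_distrib_left)
qed

lemma B1_eq_sum: "B1 h k = (\<Sum>j\<in>A. q j * (1 - 2 * (r j mod 2)))"
  unfolding B1_def
proof (rule sum.cong)
  fix j
  have "(-1::int) ^ nat \<bar>j + q j\<bar> = 1 - 2 * (r j mod 2)"
    using even_j_add_q_iff[of j] by (auto simp: minus_one_power_iff even_nat_iff even_iff_mod_2_eq_zero)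
  then show "(-1) ^ nat \<bar>j + h * j div k\<bar> * (h * j div k) = q j * (1 - 2 * (r j mod 2))"
    by (simp add: q_def)
qed simp

lemma not_dvd_hj: "j \<in> A \<Longrightarrow> \<not> k dvd h*j"
  using r_mem[of j] by (auto simp: r_def dvd_eq_mod_eq_0)

lemma sawtooth_j_divide_k:
  "j \<in> A \<Longrightarrow> sawtooth (of_int j / of_int k) = of_int j / of_int k - 1/2"
  by (rule sawtooth_of_int_divide_small) auto

lemma dedekind_sum_h_k:
  "dedekind_sum h k = (\<Sum>j\<in>A. (of_int (r j) / of_int k - 1/2) * (of_int j / of_int k - 1/2))"
  unfolding dedekind_sum_def
proof (rule sum.cong)
  fix j assume j: "j \<in> A"
  have "sawtooth (of_int (h*j) / of_int k) = of_int (r j) / of_int k - 1/2"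
    unfolding r_def by (rule sawtooth_of_int_divide[OF k_pos not_dvd_hj[OF j]])
  then show "sawtooth (of_int (h*j) / of_int k) * sawtooth (of_int j / of_int k) =
      (of_int (r j) / of_int k - 1/2) * (of_int j / of_int k - 1/2)"
    by (simp only: sawtooth_j_divide_k[OF j])
qed simp

lemma dedekind_sum_2h_k:
  "dedekind_sum (2*h) k =
     (\<Sum>j\<in>A. (of_int (2 * r j - k * upper (r j)) / of_int k - 1/2) * (of_int j / of_int k - 1/2))"
  unfolding dedekind_sum_def
proof (rule sum.cong)
  fix j assume j: "j \<in> A"
  have "2*j mod k \<in> A"
    using bij_betwE[OF bij_betw_mult_mod[of 2 k]] odd_k j by auto
  have "r (2*j mod k) = h*(2*j) mod k"
    by (simp add: r_def mod_mult_right_eq)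
  then have mod_eq: "2*h*j mod k = r (2*j mod k)"
    by (simp add: ac_simps)
  then have not_dvd: "\<not> k dvd 2*h*j"
    using r_mem[OF \<open>2*j mod k \<in> A\<close>] by (auto simp: dvd_eq_mod_eq_0)
  have "sawtooth (of_int (2*h*j) / of_int k) = of_int (2 * r j - k * upper (r j)) / of_int k - 1/2"
    using sawtooth_of_int_divide[OF k_pos not_dvd] by (simp only: mod_eq q_r_double(2)[OF j])
  then show "sawtooth (of_int (2*h*j) / of_int k) * sawtooth (of_int j / of_int k) =
      (of_int (2 * r j - k * upper (r j)) / of_int k - 1/2) * (of_int j / of_int k - 1/2)"
    by (simp only: sawtooth_j_divide_k[OF j])
qed simp

lemma dedekind_sum_h_2k:
  "dedekind_sum h (2*k) =
     2 * (\<Sum>j\<in>A. (of_int (r j + k * (q j mod 2)) / of_int (2*k) - 1/2)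
                  * (of_int j / of_int (2*k) - 1/2))"
  unfolding dedekind_sum_double_modulus[OF k_pos]
proof (intro arg_cong[where f = "\<lambda>x. 2 * x"] sum.cong)
  fix j assume j: "j \<in> A"
  have pos: "2*k > 0" and not_dvd: "\<not> 2*k dvd h*j"
    using k_pos not_dvd_hj[OF j] dvd_mult_right by auto
  have mod_eq: "h*j mod (2*k) = r j + k * (q j mod 2)"
    using zmod_zmult2_eq[where a = "h*j" and b = k and c = 2] by (simp add: q_def r_def mult.commute)
  have "sawtooth (of_int (h*j) / of_int (2*k)) = of_int (r j + k * (q j mod 2)) / of_int (2*k) - 1/2"
    using sawtooth_of_int_divide[OF pos not_dvd] by (simp only: mod_eq)
  moreover have "sawtooth (of_int j / of_int (2*k)) = of_int j / of_int (2*k) - 1/2"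
    using j by (intro sawtooth_of_int_divide_small) auto
  ultimately show "sawtooth (of_int (h*j) / of_int (2*k)) * sawtooth (of_int j / of_int (2*k)) =
      (of_int (r j + k * (q j mod 2)) / of_int (2*k) - 1/2) * (of_int j / of_int (2*k) - 1/2)"
    by (simp only:)
qed simp

text \<open>
  \<open>combined_summand j / (2k)\<close> is the \<open>j\<close>-th summand of
  \<open>-10 h s(h,k) + 4 h s(2h,k) + 4 h s(h,2k)\<close> once \<open>h j\<close> is replaced by \<open>k q\<^sub>j + r\<^sub>j\<close>.
\<close>

definition combined_summand :: "int \<Rightarrow> int" where
  "combined_summand j = 2 * (k * q j + r j) * (1 - 4 * upper (r j) + 2 * (q j mod 2))
     + h * (k - 2 * r j + 4 * k * upper (r j) - 4 * k * (q j mod 2))"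

lemma sum_combined_summand: "(\<Sum>j\<in>A. combined_summand j) = 2 * k * B1 h k + k - 1"
proof -
  have "(\<Sum>j\<in>A. combined_summand j) =
      2 * k * (\<Sum>j\<in>A. q j) - 8 * k * (\<Sum>j\<in>A. q j * upper (r j)) + 4 * k * (\<Sum>j\<in>A. q j * (q j mod 2))
      + 2 * (\<Sum>j\<in>A. r j) - 8 * (\<Sum>j\<in>A. r j * upper (r j)) + 4 * (\<Sum>j\<in>A. r j * (q j mod 2))
      + h * k * (\<Sum>j\<in>A. 1) - 2 * h * (\<Sum>j\<in>A. r j) + 4 * h * k * (\<Sum>j\<in>A. upper (r j))
      - 4 * h * k * (\<Sum>j\<in>A. q j mod 2)"
    by (simp add: combined_summand_def algebra_simps sum.distrib sum_subtractf sum_distrib_left)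
  moreover have "B1 h k = (\<Sum>j\<in>A. q j) - 2 * (\<Sum>j\<in>A. q j * (r j mod 2))"
    by (simp add: B1_eq_sum algebra_simps sum_subtractf sum_distrib_left)
  ultimately show ?thesis
    using sum_q_r_mod_2 sum_q_mod_2 sum_q_q_mod_2 sum_r_q_mod_2 sum_upper sum_upper_r sum_r
      sum_r_upper_r card_A k_eq
    by algebra
qed

lemma dedekind_sums_combination:
  "- 10 * of_int h * dedekind_sum h k + 4 * of_int h * dedekind_sum (2*h) k
     + 4 * of_int h * dedekind_sum h (2*k) = of_int (\<Sum>j\<in>A. combined_summand j) / of_int (2*k)"
proof -
  have "- 10 * of_int h * dedekind_sum h k + 4 * of_int h * dedekind_sum (2*h) k
     + 4 * of_int h * dedekind_sum h (2*k) = (\<Sum>j\<in>A. of_int (combined_summand j) / of_int (2*k))"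
    unfolding dedekind_sum_h_k dedekind_sum_2h_k dedekind_sum_h_2k sum_distrib_left sum.distrib[symmetric]
  proof (rule sum.cong)
    fix j assume "j \<in> A"
    have "of_int h * of_int j = of_int k * of_int (q j) + (of_int (r j) :: real)"
      using arg_cong[OF hj_eq[of j], of real_of_int] by simp
    then show "- 10 * of_int h * ((of_int (r j) / of_int k - 1/2) * (of_int j / of_int k - 1/2))
        + 4 * of_int h * ((of_int (2 * r j - k * upper (r j)) / of_int k - 1/2) * (of_int j / of_int k - 1/2))
        + 4 * of_int h * (2 * ((of_int (r j + k * (q j mod 2)) / of_int (2*k) - 1/2) * (of_int j / of_int (2*k) - 1/2)))
        = (of_int (combined_summand j) / of_int (2*k) :: real)"
      using k_pos unfolding combined_summand_def by (simp add: field_simps) algebra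
  qed simp
  then show ?thesis
    by (simp add: sum_divide_distrib)
qed

end

theorem theorem20:
  fixes h k :: int
  assumes "odd h" and "odd k" and "k > 0" and "coprime h k"
  shows "real_of_int (B1 h k) =
           - 10 * of_int h * dedekind_sum h k + 4 * of_int h * dedekind_sum (2*h) k
           + 4 * of_int h * dedekind_sum h (2*k) + 1 / (2 * of_int k) - 1/2"
proof -
  interpret odd_coprime_pair h k
    using assms by unfold_locales
  show ?thesis
    unfolding dedekind_sums_combination sum_combined_summand
    using \<open>k > 0\<close> by (simp add: field_simps)
qed

end
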